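(* Let $N\ge1$, $m\ge2$, and consider discrete-time agents $x_i[k+1]=Ax_i[k]+Bu_i[k]$, $y_i[k]=Cx_i[k]$, $i=1,\dots,N$, with $A,B$ the $m$-th order integrator matrices and $C\in\mathbb{R}^{1\times m}$. Apply the protocol $$u_i[k]=K_4z_i[k]-\frac{1}{1+\sum_{j\in\mathcal{N}_i(\sigma[k])}\alpha^{ij}_{\sigma[k]}}\sum_{j\in\mathcal{N}_i(\sigma[k])}\alpha^{ij}_{\sigma[k]}K_5\big(z_i[k]-z_j[k]\big),$$ $$z_i[k+1]=(A+K_6C)z_i[k]+Bu_i[k]-K_6y_i[k],$$ where $K_4=(b_1,\,b_2-b_1,\,\dots,\,b_{m-1}-b_{m-2},\,1-b_{m-1})$, $K_5=(b_1,b_2,\dots,b_{m-1},1)$, $b_1,\dots,b_{m-1}\in\mathbb{R}$, and $K_6\in\mathbb{R}^{m\times1}$. Suppose that $\mathcal{G}_{\sigma[k]}$ is uniformly jointly quasi-strongly connected in the discrete-time sense, every eigenvalue of $A+K_6C$ has modulus strictly less than $1$, and every root of $s^{m-1}+b_{m-1}s^{m-2}+\cdots+b_2s+b_1=0$ has modulus strictly less than $1$. Then for all initial conditions $x_i[0],z_i[0]\in\mathbb{R}^m$ there exists $x^*\in\mathbb{R}^m$ such that $\lim_{k\to\infty}x_i[k]=x^*$ for all $i=1,\dots,N$.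
   Context: $A\in\mathbb{R}^{m\times m}$ has ones on the superdiagonal and zeros elsewhere; $B=(0,\dots,0,1)^T$. Graphs: nodes $v_1,\dots,v_N$; edge $e_{ij}$ from $v_j$ to $v_i$ means agent $i$ receives information from agent $j$; no self-edges; a finite index set $\mathcal{S}$ of digraphs, graph $\mathcal{G}_q$ having fixed weights $\alpha^{ij}_q>0$ on its edges ($0$ otherwise), $\mathcal{N}_i(q)=\{j:e_{ij}\in\mathcal{G}_q\}$; $\sigma:\{0,1,2,\dots\}\to\mathcal{S}$ is the switching sequence. A digraph is quasi-strongly connected if some node has a directed path (sequence of distinct nodes following edge directions) to every other node. $\mathcal{G}_{\sigma[k]}$ is uniformly jointly quasi-strongly connected in the discrete-time sense if there is an integer $M>0$ such that for every $k\ge0$ the graph with edge set $\bigcup_{i=k}^{k+M}\mathcal{E}(\mathcal{G}_{\sigma[i]})$ is quasi-strongly connected. *)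

theory Defs
  imports Complex_Main "Jordan_Normal_Form.Char_Poly"
begin

definition int_A :: "nat \<Rightarrow> real mat" where
  "int_A m = mat m m (\<lambda>(a, b). if b = a + 1 then 1 else 0)"

definition int_B :: "nat \<Rightarrow> real vec" where
  "int_B m = vec m (\<lambda>a. if a = m - 1 then 1 else 0)"

(* K5 = (b_1, ..., b_{m-1}, 1), b indexed from 1 *)
definition gainK5 :: "nat \<Rightarrow> (nat \<Rightarrow> real) \<Rightarrow> real vec" where
  "gainK5 m b = vec m (\<lambda>l. if l = m - 1 then 1 else b (l + 1))"

definition gainK4 :: "nat \<Rightarrow> (nat \<Rightarrow> real) \<Rightarrow> real vec" where
  "gainK4 m b = vec m (\<lambda>l. if l = 0 then b 1
                             else if l = m - 1 then 1 - b (m - 1)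
                             else b (l + 1) - b l)"

definition char_b :: "nat \<Rightarrow> (nat \<Rightarrow> real) \<Rightarrow> complex poly" where
  "char_b m b = monom 1 (m - 1) + (\<Sum>l<m - 1. monom (complex_of_real (b (l + 1))) l)"

definition dpath :: "(nat \<times> nat) set \<Rightarrow> nat \<Rightarrow> nat \<Rightarrow> bool" where
  "dpath E u v = (\<exists>ps. ps \<noteq> [] \<and> hd ps = u \<and> last ps = v \<and> distinct ps \<and>
                     (\<forall>l. Suc l < length ps \<longrightarrow> (ps ! l, ps ! Suc l) \<in> E))"

definition quasi_strongly_connected :: "nat \<Rightarrow> (nat \<times> nat) set \<Rightarrow> bool" where
  "quasi_strongly_connected N E = (\<exists>r<N. \<forall>v<N. v \<noteq> r \<longrightarrow> dpath E r v)"

(* alpha q i j > 0 iff edge e_ij (from v_j to v_i) is in G_q *)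
definition union_edges ::
  "nat \<Rightarrow> ('q \<Rightarrow> nat \<Rightarrow> nat \<Rightarrow> real) \<Rightarrow> (nat \<Rightarrow> 'q) \<Rightarrow> nat \<Rightarrow> nat \<Rightarrow> (nat \<times> nat) set" where
  "union_edges N \<alpha> \<sigma> k M = {(j, i). i < N \<and> j < N \<and> (\<exists>l\<in>{k..k + M}. \<alpha> (\<sigma> l) i j > 0)}"

definition UJQSC :: "nat \<Rightarrow> ('q \<Rightarrow> nat \<Rightarrow> nat \<Rightarrow> real) \<Rightarrow> (nat \<Rightarrow> 'q) \<Rightarrow> bool" where
  "UJQSC N \<alpha> \<sigma> = (\<exists>M::nat. M > 0 \<and> (\<forall>k. quasi_strongly_connected N (union_edges N \<alpha> \<sigma> k M)))"

definition nbrs :: "nat \<Rightarrow> ('q \<Rightarrow> nat \<Rightarrow> nat \<Rightarrow> real) \<Rightarrow> 'q \<Rightarrow> nat \<Rightarrow> nat set" where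
  "nbrs N \<alpha> q i = {j. j < N \<and> \<alpha> q i j > 0}"

end

theory Submission
  imports Defs "Jordan_Normal_Form.Spectral_Radius" "HOL-Computational_Algebra.Fundamental_Theorem_Algebra"
begin

text \<open>The observer error \<open>z\<^sub>i - x\<^sub>i\<close> obeys \<open>e[k+1] = (A + K\<^sub>6C) e[k]\<close> and therefore decays
  geometrically. In terms of \<open>V\<^sub>i = K\<^sub>5 x\<^sub>i\<close> the protocol is normalized averaging over the current
  graph plus a disturbance built from observer errors, hence summable. With finitely many graphs
  the averaging weights are uniformly positive, and along a rooted union graph every window of
  \<open>N (M + 1)\<close> steps contracts the spread \<open>max V - min V\<close> by a fixed factor up to the disturbance;
  so all \<open>V\<^sub>i\<close> converge to one limit \<open>U\<close>. For an integrator chain \<open>V\<^sub>i = p(E) w\<^sub>i\<close>, where \<open>w\<^sub>i\<close> is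
  the first state component, \<open>E\<close> the shift and \<open>p = char_b m b\<close> is Schur stable; inverting
  \<open>p(E)\<close> one root at a time gives \<open>w\<^sub>i \<longlonglongrightarrow> U / p(1)\<close>, and every other state component is a
  shifted copy of \<open>w\<^sub>i\<close>.\<close>

section \<open>Consensus under summable disturbances\<close>

lemma path_leaves_set:
  assumes "ps \<noteq> []" "hd ps \<in> I" "last ps \<notin> I"
    and "\<forall>l. Suc l < length ps \<longrightarrow> (ps ! l, ps ! Suc l) \<in> E"
  shows "\<exists>a b. (a, b) \<in> E \<and> a \<in> I \<and> b \<notin> I"
  using assms
proof (induction ps)
  case Nil
  then show ?case by simp
next
  case (Cons p ps)
  show ?case
  proof (cases ps)
    case Nil
    with Cons.prems show ?thesis by simp
  next
    case (Cons q qs)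
    have first_edge: "(p, q) \<in> E" using Cons.prems(4) Cons by fastforce
    have edges: "\<forall>l. Suc l < length ps \<longrightarrow> (ps ! l, ps ! Suc l) \<in> E"
    proof (intro allI impI)
      fix l assume "Suc l < length ps"
      then have "Suc (Suc l) < length (p # ps)" by simp
      with Cons.prems(4) have "((p # ps) ! Suc l, (p # ps) ! Suc (Suc l)) \<in> E" by blast
      then show "(ps ! l, ps ! Suc l) \<in> E" by simp
    qed
    show ?thesis
    proof (cases "q \<in> I")
      case True
      show ?thesis
        by (rule Cons.IH) (use Cons.prems Cons True edges in auto)
    next
      case False
      with first_edge Cons.prems show ?thesis by auto
    qed
  qed
qed

lemma le_add_sum_drift:
  fixes f D :: "nat \<Rightarrow> real"
  assumes "\<And>k. f (Suc k) \<le> f k + D k" "k0 \<le> t"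
  shows "f t \<le> f k0 + sum D {k0..<t}"
proof -
  have "f (k0 + n) \<le> f k0 + sum D {k0..<k0 + n}" for n
  proof (induction n)
    case (Suc n)
    then show ?case using assms(1)[of "k0 + n"] by simp
  qed simp
  from this[of "t - k0"] assms(2) show ?thesis by simp
qed

lemma convergent_if_summable_drift:
  fixes f D :: "nat \<Rightarrow> real"
  assumes drift: "\<And>k. f (Suc k) \<le> f k + D k" and D: "\<And>k. 0 \<le> D k" "summable D"
    and bounded: "\<And>k. B \<le> f k"
  shows "convergent f"
proof -
  define tail where "tail = (\<lambda>k. suminf D - sum D {..<k})"
  have tail_0: "tail \<longlonglongrightarrow> 0"
    unfolding tail_def using tendsto_diff[OF tendsto_const[of "suminf D"] summable_LIMSEQ[OF D(2)]]
    by simp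
  have partial_sums_le: "sum D {..<k} \<le> suminf D" for k
    by (rule sum_le_suminf[OF D(2)]) (use D(1) in auto)
  have "B \<le> f k + tail k" for k
    using bounded[of k] partial_sums_le[of k] by (simp add: tail_def)
  moreover have "f (Suc k) + tail (Suc k) \<le> f k + tail k" for k
    using drift[of k] by (simp add: tail_def)
  then have "decseq (\<lambda>k. f k + tail k)"
    unfolding decseq_Suc_iff by blast
  ultimately obtain L where "(\<lambda>k. f k + tail k) \<longlonglongrightarrow> L"
    using decseq_convergent by blast
  then have "(\<lambda>k. f k + tail k - tail k) \<longlonglongrightarrow> L - 0"
    using tail_0 by (rule tendsto_diff)
  then show ?thesis
    by (auto intro: convergentI)
qed

lemma tendsto_window_sum_zero:
  fixes D :: "nat \<Rightarrow> real"
  assumes "summable D"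
  shows "(\<lambda>k. sum D {k..<k + L}) \<longlonglongrightarrow> 0"
proof -
  have "(\<lambda>k. \<Sum>j<L. D (k + j)) \<longlonglongrightarrow> (\<Sum>j<L. 0)"
    using LIMSEQ_ignore_initial_segment[OF summable_LIMSEQ_zero[OF assms]]
    by (intro tendsto_sum) (simp add: add.commute)
  moreover have "sum D {k..<k + L} = (\<Sum>j<L. D (k + j))" for k
    by (rule sum.reindex_bij_witness[of _ "\<lambda>j. k + j" "\<lambda>i. i - k"]) auto
  ultimately show ?thesis by simp
qed

lemma envelopes_tendsto_same_limit:
  fixes hi lo D :: "nat \<Rightarrow> real"
  assumes lo_hi: "\<And>k. lo k \<le> hi k"
    and hi_drift: "\<And>k. hi (Suc k) \<le> hi k + D k" and lo_drift: "\<And>k. lo k - D k \<le> lo (Suc k)"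
    and D: "\<And>k. 0 \<le> D k" "summable D" and \<rho>: "\<rho> < 1"
    and contract: "\<And>k. hi (k + L) - lo (k + L) \<le> \<rho> * (hi k - lo k) + 2 * sum D {k..<k + L}"
  shows "\<exists>U. hi \<longlonglongrightarrow> U \<and> lo \<longlonglongrightarrow> U"
proof -
  have lo_drift': "- lo (Suc k) \<le> - lo k + D k" for k
    using lo_drift[of k] by simp
  have partial_sums_le: "sum D {0..<k} \<le> suminf D" for k
    by (rule sum_le_suminf[OF D(2)]) (use D(1) in auto)
  have hi_bound: "hi k \<le> hi 0 + suminf D" for k
    using le_add_sum_drift[of hi, OF hi_drift, of 0 k] partial_sums_le[of k] by simp
  have "- hi 0 - suminf D \<le> - lo k" for k
    using lo_hi[of k] hi_bound[of k] by linarith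
  then have "convergent (\<lambda>k. - lo k)"
    by (rule convergent_if_summable_drift[of "\<lambda>k. - lo k", OF lo_drift' D])
  then obtain L' where L': "lo \<longlonglongrightarrow> L'"
    unfolding convergent_def using tendsto_minus_cancel_left by blast
  have lo_bound: "- lo k \<le> - lo 0 + suminf D" for k
    using le_add_sum_drift[of "\<lambda>k. - lo k", OF lo_drift', of 0 k] partial_sums_le[of k] by simp
  have "lo 0 - suminf D \<le> hi k" for k
    using lo_hi[of k] lo_bound[of k] by linarith
  then have "convergent hi"
    by (rule convergent_if_summable_drift[of hi, OF hi_drift D])
  then obtain H where H: "hi \<longlonglongrightarrow> H"
    unfolding convergent_def by blast
  have "L' \<le> H" using LIMSEQ_le[OF L' H] lo_hi by blast
  have "(\<lambda>k. hi (k + L) - lo (k + L)) \<longlonglongrightarrow> H - L'"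
    using LIMSEQ_ignore_initial_segment[OF H, of L] LIMSEQ_ignore_initial_segment[OF L', of L]
    by (rule tendsto_diff)
  moreover have "(\<lambda>k. \<rho> * (hi k - lo k) + 2 * sum D {k..<k + L}) \<longlonglongrightarrow> \<rho> * (H - L') + 2 * 0"
    using H L' tendsto_window_sum_zero[OF D(2)] by (intro tendsto_intros)
  ultimately have "H - L' \<le> \<rho> * (H - L') + 2 * 0"
    by (rule LIMSEQ_le) (use contract in blast)
  then have "(1 - \<rho>) * (H - L') \<le> 0"
    by (simp add: algebra_simps)
  with \<rho> \<open>L' \<le> H\<close> have "H = L'"
    by (simp add: mult_le_0_iff)
  with H L' show ?thesis by blast
qed

locale averaging_ceiling =
  fixes N :: nat and edge :: "nat \<Rightarrow> nat \<Rightarrow> nat \<Rightarrow> bool" and \<beta> :: real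
    and V :: "nat \<Rightarrow> nat \<Rightarrow> real" and vmax D c :: "nat \<Rightarrow> real" and k0 :: nat
  assumes step: "\<And>k i j. i < N \<Longrightarrow> j < N \<Longrightarrow> j = i \<or> edge k j i \<Longrightarrow>
      V i (Suc k) \<le> \<beta> * V j k + (1 - \<beta>) * vmax k + D k"
    and vmax_le_ceiling: "\<And>t. k0 \<le> t \<Longrightarrow> vmax t \<le> c t"
    and ceiling_Suc: "\<And>t. k0 \<le> t \<Longrightarrow> c (Suc t) = c t + D t"
    and \<beta>: "0 \<le> \<beta>" "\<beta> \<le> 1"
begin

lemma below_ceiling_Suc:
  assumes "k0 \<le> t" "i < N" "j < N" "j = i \<or> edge t j i" "V j t \<le> c t - \<delta>"
  shows "V i (Suc t) \<le> c (Suc t) - \<beta> * \<delta>"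
proof -
  have "\<beta> * V j t \<le> \<beta> * (c t - \<delta>)"
    using mult_left_mono[OF assms(5) \<beta>(1)] .
  moreover have "(1 - \<beta>) * vmax t \<le> (1 - \<beta>) * c t"
    using vmax_le_ceiling[OF assms(1)] \<beta> by (intro mult_left_mono) auto
  ultimately show ?thesis
    using step[OF assms(2-4)] ceiling_Suc[OF assms(1)] by (simp add: algebra_simps)
qed

lemma below_ceiling_persists:
  assumes "k0 \<le> t" "i < N" "V i t \<le> c t - \<delta>"
  shows "V i (t + s) \<le> c (t + s) - \<beta> ^ s * \<delta>"
proof (induction s)
  case 0
  then show ?case using assms by simp
next
  case (Suc s)
  then have "V i (Suc (t + s)) \<le> c (Suc (t + s)) - \<beta> * (\<beta> ^ s * \<delta>)"
    using assms by (intro below_ceiling_Suc) auto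
  then show ?case by (simp add: mult.assoc)
qed

text \<open>A root of the union graph over the window lies in \<open>I\<close>; following a path from it out of
  \<open>I\<close> yields an edge from \<open>I\<close> to an agent outside, which is pulled below the ceiling as well.\<close>

lemma below_ceiling_spreads:
  assumes t: "k0 \<le> t" and I: "I \<subseteq> {..<N}" "I \<noteq> {..<N}"
    and below: "\<forall>i\<in>I. V i t \<le> c t - \<delta>"
    and r: "r \<in> I" "\<forall>v<N. v \<noteq> r \<longrightarrow> dpath {(j, i). i < N \<and> j < N \<and> (\<exists>l\<in>{t..t + M}. edge l j i)} r v"
  shows "\<exists>b<N. b \<notin> I \<and> (\<forall>i\<in>insert b I. V i (t + Suc M) \<le> c (t + Suc M) - \<beta> ^ Suc M * \<delta>)"
proof -
  let ?E = "{(j, i). i < N \<and> j < N \<and> (\<exists>l\<in>{t..t + M}. edge l j i)}"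
  obtain v where v: "v < N" "v \<notin> I" using I by auto
  with r have "dpath ?E r v" by auto
  then obtain ps where ps: "ps \<noteq> []" "hd ps = r" "last ps = v"
    "\<forall>l. Suc l < length ps \<longrightarrow> (ps ! l, ps ! Suc l) \<in> ?E"
    unfolding dpath_def by blast
  then obtain a b where "(a, b) \<in> ?E" "a \<in> I" "b \<notin> I"
    using path_leaves_set[OF ps(1) _ _ ps(4), of I] r v by auto
  then obtain l where l: "l \<in> {t..t + M}" "edge l a b" and ab: "a < N" "b < N" "a \<in> I" "b \<notin> I"
    by auto
  have "V a (t + (l - t)) \<le> c (t + (l - t)) - \<beta> ^ (l - t) * \<delta>"
    using below ab by (intro below_ceiling_persists[OF t]) auto
  then have "V b (Suc l) \<le> c (Suc l) - \<beta> * (\<beta> ^ (l - t) * \<delta>)"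
    using l t ab by (intro below_ceiling_Suc) auto
  then have "V b (Suc l + (M - (l - t))) \<le> c (Suc l + (M - (l - t)))
      - \<beta> ^ (M - (l - t)) * (\<beta> * (\<beta> ^ (l - t) * \<delta>))"
    using l t ab by (intro below_ceiling_persists) auto
  moreover have "Suc l + (M - (l - t)) = t + Suc M"
    using l by auto
  moreover have "\<beta> ^ (M - (l - t)) * (\<beta> * (\<beta> ^ (l - t) * \<delta>)) = \<beta> ^ Suc M * \<delta>"
  proof -
    have "\<beta> ^ (M - (l - t)) * (\<beta> * (\<beta> ^ (l - t) * \<delta>)) = \<beta> ^ Suc (M - (l - t) + (l - t)) * \<delta>"
      by (simp add: power_add mult_ac)
    also have "Suc (M - (l - t) + (l - t)) = Suc M"
      using l by auto
    finally show ?thesis .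
  qed
  ultimately have "V b (t + Suc M) \<le> c (t + Suc M) - \<beta> ^ Suc M * \<delta>"
    by (simp only:)
  moreover have "V i (t + Suc M) \<le> c (t + Suc M) - \<beta> ^ Suc M * \<delta>" if "i \<in> I" for i
    using that below I by (intro below_ceiling_persists[OF t]) auto
  ultimately show ?thesis using ab by auto
qed

end

locale perturbed_averaging =
  fixes N M :: nat and edge :: "nat \<Rightarrow> nat \<Rightarrow> nat \<Rightarrow> bool" and \<beta> :: real
    and V :: "nat \<Rightarrow> nat \<Rightarrow> real" and D :: "nat \<Rightarrow> real"
  assumes N: "1 \<le> N" and \<beta>: "0 < \<beta>" "\<beta> \<le> 1" and D_nonneg: "\<And>k. 0 \<le> D k"
    and upper: "\<And>k i j. i < N \<Longrightarrow> j < N \<Longrightarrow> j = i \<or> edge k j i \<Longrightarrow>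
      V i (Suc k) \<le> \<beta> * V j k + (1 - \<beta>) * Max ((\<lambda>i. V i k) ` {..<N}) + D k"
    and lower: "\<And>k i j. i < N \<Longrightarrow> j < N \<Longrightarrow> j = i \<or> edge k j i \<Longrightarrow>
      \<beta> * V j k + (1 - \<beta>) * Min ((\<lambda>i. V i k) ` {..<N}) - D k \<le> V i (Suc k)"
    and connected: "\<And>k. quasi_strongly_connected N
      {(j, i). i < N \<and> j < N \<and> (\<exists>l\<in>{k..k + M}. edge l j i)}"
begin

abbreviation vmax :: "nat \<Rightarrow> real" where "vmax k \<equiv> Max ((\<lambda>i. V i k) ` {..<N})"
abbreviation vmin :: "nat \<Rightarrow> real" where "vmin k \<equiv> Min ((\<lambda>i. V i k) ` {..<N})"
abbreviation spread :: "nat \<Rightarrow> real" where "spread k \<equiv> vmax k - vmin k"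

lemma agents_nonempty: "(\<lambda>i. V i k) ` {..<N} \<noteq> {}"
proof -
  from N have "0 \<in> {..<N}" by simp
  then show ?thesis by blast
qed

lemma vmax_ge: "i < N \<Longrightarrow> V i k \<le> vmax k"
  by (intro Max_ge) auto

lemma vmin_le: "i < N \<Longrightarrow> vmin k \<le> V i k"
  by (intro Min_le) auto

lemma vmax_leI: "(\<And>i. i < N \<Longrightarrow> V i k \<le> a) \<Longrightarrow> vmax k \<le> a"
  using agents_nonempty by (subst Max_le_iff) auto

lemma vmin_geI: "(\<And>i. i < N \<Longrightarrow> a \<le> V i k) \<Longrightarrow> a \<le> vmin k"
  using agents_nonempty by (subst Min_ge_iff) auto

lemma vmin_le_vmax: "vmin k \<le> vmax k"
proof -
  from N have "0 < N" by simp
  then show ?thesis using vmin_le vmax_ge order_trans by blast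
qed

lemma vmax_Suc: "vmax (Suc k) \<le> vmax k + D k"
proof (rule vmax_leI)
  fix i assume i: "i < N"
  have "V i (Suc k) \<le> \<beta> * V i k + (1 - \<beta>) * vmax k + D k" using upper i by blast
  moreover have "\<beta> * V i k \<le> \<beta> * vmax k" using vmax_ge[OF i] \<beta> by simp
  ultimately show "V i (Suc k) \<le> vmax k + D k" by (simp add: algebra_simps)
qed

lemma vmin_Suc: "vmin k - D k \<le> vmin (Suc k)"
proof (rule vmin_geI)
  fix i assume i: "i < N"
  have "\<beta> * V i k + (1 - \<beta>) * vmin k - D k \<le> V i (Suc k)" using lower i by blast
  moreover have "\<beta> * vmin k \<le> \<beta> * V i k" using vmin_le[OF i] \<beta> by simp
  ultimately show "vmin k - D k \<le> V i (Suc k)" by (simp add: algebra_simps)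
qed

lemma vmax_le: "k0 \<le> t \<Longrightarrow> vmax t \<le> vmax k0 + sum D {k0..<t}"
  using le_add_sum_drift[of vmax, OF vmax_Suc] .

lemma vmin_ge: "k0 \<le> t \<Longrightarrow> vmin k0 - sum D {k0..<t} \<le> vmin t"
proof -
  have "- vmin (Suc k) \<le> - vmin k + D k" for k
    using vmin_Suc[of k] by simp
  then show "k0 \<le> t \<Longrightarrow> vmin k0 - sum D {k0..<t} \<le> vmin t"
    using le_add_sum_drift[of "\<lambda>k. - vmin k"] by fastforce
qed

lemma upper_ceiling:
  "averaging_ceiling N edge \<beta> V vmax D (\<lambda>t. vmax k0 + sum D {k0..<t}) k0"
  using upper \<beta> vmax_le by unfold_locales auto

lemma lower_ceiling:
  "averaging_ceiling N edge \<beta> (\<lambda>i k. - V i k) (\<lambda>k. - vmin k) D (\<lambda>t. - vmin k0 + sum D {k0..<t}) k0"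
proof unfold_locales
  show "- V i (Suc k) \<le> \<beta> * - V j k + (1 - \<beta>) * - vmin k + D k"
    if "i < N" "j < N" "j = i \<or> edge k j i" for k i j
    using lower[OF that] by (simp add: algebra_simps)
  show "- vmin t \<le> - vmin k0 + sum D {k0..<t}" if "k0 \<le> t" for t
    using vmin_ge[OF that] by simp
qed (use \<beta> in auto)

text \<open>\<open>vmax k0 + sum D {k0..<t}\<close> bounds \<open>vmax t\<close> from above for \<open>t \<ge> k0\<close>, and symmetrically for the
  minimum; a split puts every agent at least \<open>\<delta>\<close> inside one of these two bounds.\<close>

definition split_at :: "nat \<Rightarrow> nat \<Rightarrow> real \<Rightarrow> nat set \<Rightarrow> nat set \<Rightarrow> bool" where
  "split_at k0 t \<delta> T B \<longleftrightarrow> T \<subseteq> {..<N} \<and> B \<subseteq> {..<N} \<and> T \<union> B = {..<N} \<and>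
    (\<forall>i\<in>T. V i t \<le> vmax k0 + sum D {k0..<t} - \<delta>) \<and>
    (\<forall>i\<in>B. - V i t \<le> - vmin k0 + sum D {k0..<t} - \<delta>)"

lemma below_or_above_midpoint:
  "V i k \<le> vmax k - spread k / 2 \<or> - V i k \<le> - vmin k - spread k / 2"
  by (rule disjCI) (simp add: field_simps)

lemma split_at_start: "split_at k0 k0 (spread k0 / 2)
    {i\<in>{..<N}. V i k0 \<le> vmax k0 - spread k0 / 2} {i\<in>{..<N}. - V i k0 \<le> - vmin k0 - spread k0 / 2}"
  using below_or_above_midpoint by (auto simp: split_at_def)

lemma split_at_persists:
  assumes "k0 \<le> t" "split_at k0 t \<delta> T B"
  shows "split_at k0 (t + s) (\<beta> ^ s * \<delta>) T B"
  using assms averaging_ceiling.below_ceiling_persists[OF upper_ceiling assms(1)]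
    averaging_ceiling.below_ceiling_persists[OF lower_ceiling assms(1)]
  unfolding split_at_def by blast

lemma split_at_grows:
  assumes t: "k0 \<le> t" and split: "split_at k0 t \<delta> T B" and "T \<noteq> {..<N}" "B \<noteq> {..<N}"
  obtains T' B' where "split_at k0 (t + Suc M) (\<beta> ^ Suc M * \<delta>) T' B'" "card T + card B < card T' + card B'"
proof -
  have TB: "T \<subseteq> {..<N}" "B \<subseteq> {..<N}" "T \<union> B = {..<N}"
    "\<forall>i\<in>T. V i t \<le> vmax k0 + sum D {k0..<t} - \<delta>" "\<forall>i\<in>B. - V i t \<le> - vmin k0 + sum D {k0..<t} - \<delta>"
    using split by (simp_all add: split_at_def)
  have fin: "finite T" "finite B" using TB(1,2) finite_subset by auto
  from connected[of t] obtain r where r: "r < N"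
    "\<forall>v<N. v \<noteq> r \<longrightarrow> dpath {(j, i). i < N \<and> j < N \<and> (\<exists>l\<in>{t..t + M}. edge l j i)} r v"
    unfolding quasi_strongly_connected_def by blast
  have persists: "split_at k0 (t + Suc M) (\<beta> ^ Suc M * \<delta>) T B"
    using split_at_persists[OF t split] .
  consider "r \<in> T" | "r \<in> B" using TB(3) r(1) by blast
  then show ?thesis
  proof cases
    case 1
    from averaging_ceiling.below_ceiling_spreads[OF upper_ceiling t TB(1) \<open>T \<noteq> {..<N}\<close> TB(4) 1 r(2)]
    obtain b where "b < N" "b \<notin> T"
      "\<forall>i\<in>insert b T. V i (t + Suc M) \<le> vmax k0 + sum D {k0..<t + Suc M} - \<beta> ^ Suc M * \<delta>"
      by blast
    with persists have "split_at k0 (t + Suc M) (\<beta> ^ Suc M * \<delta>) (insert b T) B"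
      by (auto simp: split_at_def)
    moreover have "card T + card B < card (insert b T) + card B"
      using \<open>b \<notin> T\<close> fin by simp
    ultimately show ?thesis by (rule that)
  next
    case 2
    from averaging_ceiling.below_ceiling_spreads[OF lower_ceiling t TB(2) \<open>B \<noteq> {..<N}\<close> TB(5) 2 r(2)]
    obtain b where "b < N" "b \<notin> B"
      "\<forall>i\<in>insert b B. - V i (t + Suc M) \<le> - vmin k0 + sum D {k0..<t + Suc M} - \<beta> ^ Suc M * \<delta>"
      by blast
    with persists have "split_at k0 (t + Suc M) (\<beta> ^ Suc M * \<delta>) T (insert b B)"
      by (auto simp: split_at_def)
    moreover have "card T + card B < card T + card (insert b B)"
      using \<open>b \<notin> B\<close> fin by simp
    ultimately show ?thesis by (rule that)
  qed
qed

text \<open>Each window of \<open>M + 1\<close> steps adds an agent to one side of the split, until one side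
  contains all agents.\<close>

lemma spread_invariant:
  "\<exists>T B. split_at k0 (k0 + n * Suc M) (\<beta> ^ (n * Suc M) * (spread k0 / 2)) T B \<and>
    (T = {..<N} \<or> B = {..<N} \<or> N + n \<le> card T + card B)"
proof (induction n)
  case 0
  let ?T = "{i\<in>{..<N}. V i k0 \<le> vmax k0 - spread k0 / 2}"
  let ?B = "{i\<in>{..<N}. - V i k0 \<le> - vmin k0 - spread k0 / 2}"
  have card: "N \<le> card ?T + card ?B"
    using card_Un_le[of ?T ?B] split_at_start[of k0] by (simp add: split_at_def)
  show ?case
    by (rule exI[of _ ?T], rule exI[of _ ?B]) (use split_at_start[of k0] card in simp)
next
  case (Suc n)
  let ?t = "k0 + n * Suc M" and ?\<delta> = "\<beta> ^ (n * Suc M) * (spread k0 / 2)"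
  have t: "k0 \<le> ?t" by simp
  have Suc_eq: "k0 + Suc n * Suc M = ?t + Suc M" "\<beta> ^ (Suc n * Suc M) * (spread k0 / 2) = \<beta> ^ Suc M * ?\<delta>"
    by (simp_all add: power_add mult_ac)
  from Suc obtain T B where split: "split_at k0 ?t ?\<delta> T B"
    and progress: "T = {..<N} \<or> B = {..<N} \<or> N + n \<le> card T + card B"
    by blast
  show ?case
    unfolding Suc_eq
  proof (cases "T = {..<N} \<or> B = {..<N}")
    case True
    show "\<exists>T B. split_at k0 (?t + Suc M) (\<beta> ^ Suc M * ?\<delta>) T B \<and>
        (T = {..<N} \<or> B = {..<N} \<or> N + Suc n \<le> card T + card B)"
      by (rule exI[of _ T], rule exI[of _ B]) (use True split_at_persists[OF t split] in blast)
  next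
    case False
    with split_at_grows[OF t split] obtain T' B' where
      split': "split_at k0 (?t + Suc M) (\<beta> ^ Suc M * ?\<delta>) T' B'" and "card T + card B < card T' + card B'"
      by blast
    moreover have "N + n \<le> card T + card B" using False progress by blast
    ultimately have "N + Suc n \<le> card T' + card B'" by linarith
    then show "\<exists>T B. split_at k0 (?t + Suc M) (\<beta> ^ Suc M * ?\<delta>) T B \<and>
        (T = {..<N} \<or> B = {..<N} \<or> N + Suc n \<le> card T + card B)"
      using split' by blast
  qed
qed

lemma spread_contracts:
  defines "L \<equiv> N * Suc M"
  shows "spread (k0 + L) \<le> (1 - \<beta> ^ L / 2) * spread k0 + 2 * sum D {k0..<k0 + L}"
proof -
  from spread_invariant[of k0 N] obtain T B
    where split: "split_at k0 (k0 + L) (\<beta> ^ L * (spread k0 / 2)) T B"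
      and progress: "T = {..<N} \<or> B = {..<N} \<or> N + N \<le> card T + card B"
    unfolding L_def by blast
  then have TB: "T \<subseteq> {..<N}" "B \<subseteq> {..<N}"
    "\<forall>i\<in>T. V i (k0 + L) \<le> vmax k0 + sum D {k0..<k0 + L} - \<beta> ^ L * (spread k0 / 2)"
    "\<forall>i\<in>B. - V i (k0 + L) \<le> - vmin k0 + sum D {k0..<k0 + L} - \<beta> ^ L * (spread k0 / 2)"
    by (simp_all add: split_at_def)
  have "T = {..<N} \<or> B = {..<N}"
  proof (rule ccontr)
    assume neither: "\<not> (T = {..<N} \<or> B = {..<N})"
    have "card T \<le> N" "card B \<le> N"
      using card_mono[OF _ TB(1)] card_mono[OF _ TB(2)] by auto
    with neither progress have "card T = card {..<N}" by simp
    then have "T = {..<N}" using TB(1) by (intro card_subset_eq) auto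
    with neither show False by blast
  qed
  moreover have "T = {..<N} \<Longrightarrow> vmax (k0 + L) \<le> vmax k0 + sum D {k0..<k0 + L} - \<beta> ^ L * (spread k0 / 2)"
    using TB(3) by (intro vmax_leI) auto
  moreover have "B = {..<N} \<Longrightarrow> vmin k0 - sum D {k0..<k0 + L} + \<beta> ^ L * (spread k0 / 2) \<le> vmin (k0 + L)"
    using TB(4) by (intro vmin_geI) force
  moreover have "(1 - \<beta> ^ L / 2) * spread k0 = spread k0 - \<beta> ^ L * (spread k0 / 2)"
    by (simp add: field_simps)
  ultimately show ?thesis
    using vmax_le[of k0 "k0 + L"] vmin_ge[of k0 "k0 + L"] by (elim disjE) linarith+
qed

theorem consensus:
  assumes "summable D"
  shows "\<exists>U. \<forall>i<N. (\<lambda>k. V i k) \<longlonglongrightarrow> U"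
proof -
  obtain U where U: "vmax \<longlonglongrightarrow> U" "vmin \<longlonglongrightarrow> U"
  proof (rule envelopes_tendsto_same_limit[of vmin vmax D "1 - \<beta> ^ (N * Suc M) / 2" "N * Suc M",
        THEN exE])
    show "1 - \<beta> ^ (N * Suc M) / 2 < 1" using \<beta> by simp
  qed (use vmin_le_vmax vmax_Suc vmin_Suc D_nonneg assms spread_contracts in auto)
  have "(\<lambda>k. V i k) \<longlonglongrightarrow> U" if "i < N" for i
    by (rule tendsto_sandwich[OF _ _ U(2) U(1)]) (use that vmin_le vmax_ge in auto)
  then show ?thesis by blast
qed

end

text \<open>The update \<open>v i - c \<Sum>\<^sub>j a\<^sub>j (v i - v j)\<close> with \<open>c = 1 / (1 + \<Sum>\<^sub>j a\<^sub>j)\<close> is the convex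
  combination with weight \<open>c\<close> on \<open>v i\<close> and \<open>c a\<^sub>j\<close> on \<open>v j\<close>; if all weights are at least \<open>\<beta>\<close>,
  any single agent \<open>j\<^sub>0\<close> keeps a share \<open>\<beta>\<close> and the rest is bounded by the maximum \<open>M\<close>.\<close>

lemma normalized_averaging_le:
  fixes a v :: "nat \<Rightarrow> real"
  assumes J: "finite J" "i \<notin> J" and a: "\<forall>j\<in>J. 0 \<le> a j"
    and le_M: "\<forall>j\<in>insert i J. v j \<le> M" and \<beta>: "0 \<le> \<beta>"
    and \<beta>_self: "\<beta> \<le> 1 / (1 + sum a J)" and \<beta>_nbr: "\<forall>j\<in>J. \<beta> \<le> a j / (1 + sum a J)"
    and j0: "j0 \<in> insert i J"
  shows "v i - 1 / (1 + sum a J) * (\<Sum>j\<in>J. a j * (v i - v j)) \<le> \<beta> * v j0 + (1 - \<beta>) * M"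
proof -
  define c where "c = 1 / (1 + sum a J)"
  have "0 \<le> sum a J" using a by (simp add: sum_nonneg)
  then have c: "0 < c" "c * sum a J = 1 - c" by (simp_all add: c_def field_simps)
  have convex: "v i - c * (\<Sum>j\<in>J. a j * (v i - v j)) - M = c * (v i - M) + (\<Sum>j\<in>J. c * a j * (v j - M))"
  proof -
    define P where "P = (\<Sum>j\<in>J. a j * v j)"
    have "(\<Sum>j\<in>J. a j * (v i - v j)) = sum a J * v i - P"
      by (simp add: P_def right_diff_distrib sum_subtractf sum_distrib_right)
    moreover have "(\<Sum>j\<in>J. c * a j * (v j - M)) = c * P - c * sum a J * M"
      by (simp add: P_def algebra_simps sum_subtractf sum_distrib_left sum_distrib_right)
    moreover have "v i - c * (sum a J * v i - P) - M - (c * (v i - M) + (c * P - c * sum a J * M))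
        = (1 - c - c * sum a J) * (v i - M)"
      by (simp add: algebra_simps)
    ultimately show ?thesis using c(2) by simp
  qed
  have terms_nonpos: "c * a j * (v j - M) \<le> 0" if "j \<in> J" for j
    using a le_M c(1) that by (auto intro!: mult_nonneg_nonpos)
  have "c * (v i - M) + (\<Sum>j\<in>J. c * a j * (v j - M)) \<le> \<beta> * (v j0 - M)"
  proof (cases "j0 = i")
    case True
    have "c * (v i - M) \<le> \<beta> * (v i - M)"
      using \<beta>_self le_M by (intro mult_right_mono_neg) (auto simp: c_def)
    moreover have "(\<Sum>j\<in>J. c * a j * (v j - M)) \<le> 0"
      using terms_nonpos by (simp add: sum_nonpos)
    ultimately show ?thesis using True by simp
  next
    case False
    with j0 have j0: "j0 \<in> J" by simp
    have "(\<Sum>j\<in>J. c * a j * (v j - M)) = c * a j0 * (v j0 - M) + (\<Sum>j\<in>J - {j0}. c * a j * (v j - M))"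
      using J(1) j0 by (simp add: sum.remove)
    also have "\<dots> \<le> \<beta> * (v j0 - M) + 0"
      using \<beta>_nbr le_M j0 terms_nonpos
      by (intro add_mono mult_right_mono_neg sum_nonpos) (auto simp: c_def)
    finally show ?thesis
      using c(1) le_M by (simp add: mult_nonneg_nonpos add.commute add_decreasing)
  qed
  with convex show ?thesis
    by (simp add: c_def algebra_simps)
qed

lemma abs_normalized_weighted_sum_le:
  fixes a p :: "nat \<Rightarrow> real"
  assumes "finite J" and a: "\<forall>j\<in>J. 0 \<le> a j" and p: "\<forall>j\<in>J. \<bar>q - p j\<bar> \<le> B" and "0 \<le> B"
  shows "\<bar>1 / (1 + sum a J) * (\<Sum>j\<in>J. a j * (q - p j))\<bar> \<le> B"
proof -
  have s: "0 \<le> sum a J" using a by (simp add: sum_nonneg)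
  have "\<bar>\<Sum>j\<in>J. a j * (q - p j)\<bar> \<le> (\<Sum>j\<in>J. a j * B)"
    using a p by (intro order_trans[OF sum_abs] sum_mono) (auto simp: abs_mult mult_left_mono)
  also have "\<dots> = sum a J * B" by (simp add: sum_distrib_right)
  also have "\<dots> \<le> (1 + sum a J) * B"
    using \<open>0 \<le> B\<close> by (simp add: distrib_right)
  finally show ?thesis
    using s by (simp add: abs_mult field_simps)
qed

lemma uniform_averaging_weight:
  fixes \<alpha> :: "'q \<Rightarrow> nat \<Rightarrow> nat \<Rightarrow> real"
  assumes "finite S" and nonneg: "\<And>q i j. q \<in> S \<Longrightarrow> 0 \<le> \<alpha> q i j"
  obtains \<beta> where "0 < \<beta>" "\<beta> \<le> 1"
    "\<And>q i. q \<in> S \<Longrightarrow> i < N \<Longrightarrow> \<beta> \<le> 1 / (1 + sum (\<alpha> q i) (nbrs N \<alpha> q i))"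
    "\<And>q i j. q \<in> S \<Longrightarrow> i < N \<Longrightarrow> j \<in> nbrs N \<alpha> q i \<Longrightarrow>
      \<beta> \<le> \<alpha> q i j / (1 + sum (\<alpha> q i) (nbrs N \<alpha> q i))"
proof -
  define W where "W = (\<lambda>(q, i, j). \<alpha> q i j) ` (S \<times> {..<N} \<times> {..<N})"
  have "finite W" unfolding W_def using assms(1) by simp
  define wmax where "wmax = Max (insert 0 W)"
  define wmin where "wmin = Min (insert 1 {w\<in>W. 0 < w})"
  have wmax: "0 \<le> wmax" and wmin: "0 < wmin" "wmin \<le> 1"
    using \<open>finite W\<close> by (auto simp: wmax_def wmin_def Min_gr_iff)
  have in_W: "\<alpha> q i j \<in> W" if "q \<in> S" "i < N" "j < N" for q i j
    using that unfolding W_def by force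
  have le_wmax: "\<alpha> q i j \<le> wmax" if "q \<in> S" "i < N" "j < N" for q i j
    using in_W[OF that] \<open>finite W\<close> by (simp add: wmax_def)
  have ge_wmin: "wmin \<le> \<alpha> q i j" if "q \<in> S" "i < N" "j \<in> nbrs N \<alpha> q i" for q i j
  proof -
    have "\<alpha> q i j \<in> {w\<in>W. 0 < w}"
      using that in_W[of q i j] by (simp add: nbrs_def)
    then show ?thesis using \<open>finite W\<close> by (simp add: wmin_def)
  qed
  have sum_le: "sum (\<alpha> q i) (nbrs N \<alpha> q i) \<le> N * wmax" if "q \<in> S" "i < N" for q i
  proof -
    have "sum (\<alpha> q i) (nbrs N \<alpha> q i) \<le> card (nbrs N \<alpha> q i) * wmax"
      using le_wmax that by (intro sum_bounded_above) (auto simp: nbrs_def)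
    also have "\<dots> \<le> N * wmax"
      using card_mono[of "{..<N}" "nbrs N \<alpha> q i"] wmax by (intro mult_right_mono) (auto simp: nbrs_def)
    finally show ?thesis .
  qed
  have nbr_sum_nonneg: "0 \<le> sum (\<alpha> q i) (nbrs N \<alpha> q i)" if "q \<in> S" for q i
    using nonneg that by (simp add: sum_nonneg)
  have "0 \<le> N * wmax" using wmax by simp
  show ?thesis
  proof (rule that[of "wmin / (1 + N * wmax)"])
    show "0 < wmin / (1 + N * wmax)" "wmin / (1 + N * wmax) \<le> 1"
      using wmin \<open>0 \<le> N * wmax\<close> by (simp_all add: divide_le_eq)
    show "wmin / (1 + N * wmax) \<le> 1 / (1 + sum (\<alpha> q i) (nbrs N \<alpha> q i))" if "q \<in> S" "i < N" for q i
      using wmax wmin sum_le[OF that] nbr_sum_nonneg[OF that(1), of i]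
      by (intro frac_le) auto
    show "wmin / (1 + N * wmax) \<le> \<alpha> q i j / (1 + sum (\<alpha> q i) (nbrs N \<alpha> q i))"
      if "q \<in> S" "i < N" "j \<in> nbrs N \<alpha> q i" for q i j
      using wmax wmin sum_le[OF that(1,2)] nbr_sum_nonneg[OF that(1), of i] ge_wmin[OF that]
      by (intro frac_le) auto
  qed
qed

lemma nbrs_averaging_le:
  fixes \<alpha> :: "'q \<Rightarrow> nat \<Rightarrow> nat \<Rightarrow> real" and x :: "nat \<Rightarrow> real"
  assumes nonneg: "\<And>j. 0 \<le> \<alpha> q i j" and no_loop: "\<alpha> q i i = 0" and "0 \<le> \<beta>"
    and "\<beta> \<le> 1 / (1 + sum (\<alpha> q i) (nbrs N \<alpha> q i))"
    and "\<And>j. j \<in> nbrs N \<alpha> q i \<Longrightarrow> \<beta> \<le> \<alpha> q i j / (1 + sum (\<alpha> q i) (nbrs N \<alpha> q i))"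
    and "i < N" "j < N" "j = i \<or> 0 < \<alpha> q i j" and "\<forall>l<N. x l \<le> M"
  shows "x i - 1 / (1 + (\<Sum>j\<in>nbrs N \<alpha> q i. \<alpha> q i j)) * (\<Sum>j\<in>nbrs N \<alpha> q i. \<alpha> q i j * (x i - x j))
    \<le> \<beta> * x j + (1 - \<beta>) * M"
proof (rule normalized_averaging_le)
  show "finite (nbrs N \<alpha> q i)"
    by (rule finite_subset[of _ "{..<N}"]) (auto simp: nbrs_def)
  show "i \<notin> nbrs N \<alpha> q i" "j \<in> insert i (nbrs N \<alpha> q i)" "\<forall>j\<in>insert i (nbrs N \<alpha> q i). x j \<le> M"
    using no_loop assms(6-9) by (auto simp: nbrs_def)
qed (use assms in auto)

theorem switching_consensus_summable_disturbance:
  fixes \<alpha> :: "'q \<Rightarrow> nat \<Rightarrow> nat \<Rightarrow> real" and \<sigma> :: "nat \<Rightarrow> 'q"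
    and V \<eta> :: "nat \<Rightarrow> nat \<Rightarrow> real" and D :: "nat \<Rightarrow> real"
  assumes N: "1 \<le> N" and S: "finite S" "\<And>k. \<sigma> k \<in> S"
    and nonneg: "\<And>q i j. q \<in> S \<Longrightarrow> 0 \<le> \<alpha> q i j" and no_loops: "\<And>q i. q \<in> S \<Longrightarrow> \<alpha> q i i = 0"
    and "UJQSC N \<alpha> \<sigma>"
    and update: "\<And>i k. i < N \<Longrightarrow> V i (Suc k) = V i k
      - 1 / (1 + (\<Sum>j\<in>nbrs N \<alpha> (\<sigma> k) i. \<alpha> (\<sigma> k) i j))
        * (\<Sum>j\<in>nbrs N \<alpha> (\<sigma> k) i. \<alpha> (\<sigma> k) i j * (V i k - V j k)) + \<eta> i k"
    and disturbance: "\<And>i k. i < N \<Longrightarrow> \<bar>\<eta> i k\<bar> \<le> D k" and "summable D"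
  shows "\<exists>U. \<forall>i<N. (\<lambda>k. V i k) \<longlonglongrightarrow> U"
proof -
  obtain \<beta> where \<beta>: "0 < \<beta>" "\<beta> \<le> 1"
    and \<beta>_self: "\<And>q i. q \<in> S \<Longrightarrow> i < N \<Longrightarrow> \<beta> \<le> 1 / (1 + sum (\<alpha> q i) (nbrs N \<alpha> q i))"
    and \<beta>_nbr: "\<And>q i j. q \<in> S \<Longrightarrow> i < N \<Longrightarrow> j \<in> nbrs N \<alpha> q i \<Longrightarrow>
      \<beta> \<le> \<alpha> q i j / (1 + sum (\<alpha> q i) (nbrs N \<alpha> q i))"
    using uniform_averaging_weight[where \<alpha> = \<alpha> and N = N, OF S(1) nonneg] by blast
  from \<open>UJQSC N \<alpha> \<sigma>\<close> obtain M where
    M: "\<And>k. quasi_strongly_connected N (union_edges N \<alpha> \<sigma> k M)"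
    unfolding UJQSC_def by blast
  define edge where "edge k j i \<longleftrightarrow> 0 < \<alpha> (\<sigma> k) i j" for k j i
  have averaging_le: "x i - 1 / (1 + (\<Sum>j\<in>nbrs N \<alpha> (\<sigma> k) i. \<alpha> (\<sigma> k) i j))
      * (\<Sum>j\<in>nbrs N \<alpha> (\<sigma> k) i. \<alpha> (\<sigma> k) i j * (x i - x j)) \<le> \<beta> * x j + (1 - \<beta>) * Mx"
    if "i < N" "j < N" "j = i \<or> edge k j i" "\<forall>l<N. x l \<le> Mx" for x :: "nat \<Rightarrow> real" and i j k Mx
    by (rule nbrs_averaging_le[where q = "\<sigma> k" and \<alpha> = \<alpha>])
      (use that \<beta> nonneg[OF S(2)] no_loops[OF S(2)] \<beta>_self[OF S(2)] \<beta>_nbr[OF S(2)] in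
        \<open>auto simp: edge_def\<close>)
  have "perturbed_averaging N M edge \<beta> V D"
  proof
    show "0 \<le> D k" for k
      using disturbance[of 0 k] N by simp
    show "V i (Suc k) \<le> \<beta> * V j k + (1 - \<beta>) * Max ((\<lambda>i. V i k) ` {..<N}) + D k"
      if "i < N" "j < N" "j = i \<or> edge k j i" for k i j
    proof -
      have "\<forall>l<N. V l k \<le> Max ((\<lambda>i. V i k) ` {..<N})" by (auto intro: Max_ge)
      from averaging_le[OF that this] show ?thesis
        using update[OF that(1), of k] disturbance[OF that(1), of k] by linarith
    qed
    show "\<beta> * V j k + (1 - \<beta>) * Min ((\<lambda>i. V i k) ` {..<N}) - D k \<le> V i (Suc k)"
      if "i < N" "j < N" "j = i \<or> edge k j i" for k i j
    proof -
      have "(\<Sum>j\<in>nbrs N \<alpha> (\<sigma> k) i. \<alpha> (\<sigma> k) i j * (- V i k - - V j k))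
          = - (\<Sum>j\<in>nbrs N \<alpha> (\<sigma> k) i. \<alpha> (\<sigma> k) i j * (V i k - V j k))"
        by (simp add: sum_negf[symmetric] algebra_simps)
      then show ?thesis
        using averaging_le[OF that, of "\<lambda>l. - V l k" "- Min ((\<lambda>i. V i k) ` {..<N})"]
          update[OF that(1), of k] disturbance[OF that(1), of k]
        by (simp add: Min_le algebra_simps)
    qed
    show "quasi_strongly_connected N {(j, i). i < N \<and> j < N \<and> (\<exists>l\<in>{k..k + M}. edge l j i)}" for k
      using M[of k] by (simp add: union_edges_def edge_def)
  qed (use N \<beta> in auto)
  then show ?thesis
    using \<open>summable D\<close> by (rule perturbed_averaging.consensus)
qed

section \<open>Stable linear recurrences\<close>

lemma tendsto_zero_if_contracting:
  fixes a \<epsilon> :: "nat \<Rightarrow> real"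
  assumes step: "\<And>k. a (Suc k) \<le> r * a k + \<epsilon> k" and nonneg: "\<And>k. 0 \<le> a k"
    and r: "0 \<le> r" "r < 1" and \<epsilon>: "\<epsilon> \<longlonglongrightarrow> 0"
  shows "a \<longlonglongrightarrow> 0"
proof (rule LIMSEQ_I)
  fix e :: real assume e: "0 < e"
  then have "0 < (1 - r) * e / 2" using r by simp
  from LIMSEQ_D[OF \<epsilon> this] obtain K where K: "\<And>k. K \<le> k \<Longrightarrow> norm (\<epsilon> k) < (1 - r) * e / 2"
    by auto
  have from_K: "a (K + n) \<le> r ^ n * a K + e / 2" for n
  proof (induction n)
    case 0
    then show ?case using e by simp
  next
    case (Suc n)
    have "a (K + Suc n) \<le> r * a (K + n) + \<epsilon> (K + n)" using step by simp
    also have "\<dots> \<le> r * (r ^ n * a K + e / 2) + (1 - r) * e / 2"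
      using Suc r K[of "K + n"] by (intro add_mono mult_left_mono) auto
    also have "\<dots> = r ^ Suc n * a K + e / 2" by (simp add: field_simps)
    finally show ?case .
  qed
  have "(\<lambda>n. r ^ n * a K) \<longlonglongrightarrow> 0 * a K"
    by (intro tendsto_mult LIMSEQ_power_zero tendsto_const) (use r in auto)
  from LIMSEQ_D[OF this[simplified], of "e / 2"] e obtain N1
    where N1: "\<And>n. N1 \<le> n \<Longrightarrow> norm (r ^ n * a K) < e / 2"
    by auto
  show "\<exists>n0. \<forall>n\<ge>n0. norm (a n - 0) < e"
  proof (intro exI allI impI)
    fix n assume n: "K + N1 \<le> n"
    have "a n \<le> r ^ (n - K) * a K + e / 2" using from_K[of "n - K"] n by simp
    moreover have "norm (r ^ (n - K) * a K) < e / 2" using N1 n by simp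
    ultimately have "a n < e" by simp
    then show "norm (a n - 0) < e" using nonneg[of n] by simp
  qed
qed

lemma first_order_recurrence_tendsto:
  fixes y f :: "nat \<Rightarrow> complex"
  assumes step: "\<And>k. y (Suc k) = l * y k + f k" and l: "cmod l < 1" and f: "f \<longlonglongrightarrow> F"
  shows "y \<longlonglongrightarrow> F / (1 - l)"
proof -
  have "1 - l \<noteq> 0" using l by auto
  define g where "g k = y k - F / (1 - l)" for k
  have g_step: "g (Suc k) = l * g k + (f k - F)" for k
    unfolding g_def step using \<open>1 - l \<noteq> 0\<close> by (simp add: field_simps)
  have "(\<lambda>k. cmod (g k)) \<longlonglongrightarrow> 0"
  proof (rule tendsto_zero_if_contracting)
    show "cmod (g (Suc k)) \<le> cmod l * cmod (g k) + cmod (f k - F)" for k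
      unfolding g_step by (metis norm_mult norm_triangle_ineq)
    show "(\<lambda>k. cmod (f k - F)) \<longlonglongrightarrow> 0"
      using tendsto_norm[OF tendsto_diff[OF f tendsto_const[of F]]] by simp
  qed (use l in auto)
  then have "(\<lambda>k. g k + F / (1 - l)) \<longlonglongrightarrow> 0 + F / (1 - l)"
    by (intro tendsto_intros) (simp add: tendsto_norm_zero_iff)
  then show ?thesis unfolding g_def by simp
qed

text \<open>\<open>p(E) w\<close> for the forward shift \<open>E\<close>.\<close>

definition poly_shift :: "complex poly \<Rightarrow> (nat \<Rightarrow> complex) \<Rightarrow> nat \<Rightarrow> complex" where
  "poly_shift p w k = (\<Sum>j\<le>degree p. coeff p j * w (k + j))"

lemma poly_shift_eq_sum:
  assumes "degree p < n"
  shows "poly_shift p w k = (\<Sum>j<n. coeff p j * w (k + j))"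
  unfolding poly_shift_def
  by (rule sum.mono_neutral_left) (use assms in \<open>auto simp: coeff_eq_0\<close>)

lemma poly_shift_linear_factor:
  "poly_shift ([:- l, 1:] * q) w k = poly_shift q w (Suc k) - l * poly_shift q w k"
proof -
  define n where "n = Suc (Suc (degree q))"
  have "degree ([:- l, 1:] * q) < n"
    using degree_mult_le[of "[:- l, 1:]" q] by (simp add: n_def)
  then have "poly_shift ([:- l, 1:] * q) w k = (\<Sum>j<n. coeff ([:- l, 1:] * q) j * w (k + j))"
    by (rule poly_shift_eq_sum)
  also have "\<dots> = (\<Sum>j<n. coeff (pCons 0 q) j * w (k + j)) - l * (\<Sum>j<n. coeff q j * w (k + j))"
    by (simp add: algebra_simps sum.distrib sum_subtractf sum_distrib_left)
  also have "(\<Sum>j<n. coeff (pCons 0 q) j * w (k + j)) = (\<Sum>j<Suc (degree q). coeff q j * w (Suc k + j))"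
    unfolding n_def by (subst sum.lessThan_Suc_shift) simp
  also have "\<dots> = poly_shift q w (Suc k)"
    using poly_shift_eq_sum[of q "Suc (degree q)" w "Suc k"] by simp
  also have "(\<Sum>j<n. coeff q j * w (k + j)) = poly_shift q w k"
    by (rule poly_shift_eq_sum[symmetric]) (simp add: n_def)
  finally show ?thesis .
qed

text \<open>Peeling off one root \<open>\<lambda>\<close> at a time reduces a stable recurrence of order \<open>d\<close> to a stable
  first-order recurrence driving one of order \<open>d - 1\<close>.\<close>

lemma tendsto_if_poly_shift_tendsto:
  assumes "p \<noteq> 0" and stable: "\<And>s. poly p s = 0 \<Longrightarrow> cmod s < 1"
    and "(\<lambda>k. poly_shift p w k) \<longlonglongrightarrow> L"
  shows "w \<longlonglongrightarrow> L / poly p 1"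
  using assms
proof (induction "degree p" arbitrary: p L)
  case 0
  then obtain c where c: "p = [:c:]" "c \<noteq> 0" by (metis degree_eq_zeroE pCons_0_0)
  then have "(\<lambda>k. (1 / c) * (c * w k)) \<longlonglongrightarrow> (1 / c) * L"
    using "0.prems"(3) by (intro tendsto_intros) (simp add: poly_shift_def)
  then show ?case using c by simp
next
  case (Suc d)
  have "\<not> constant (poly p)" using Suc(2) by (simp add: constant_degree)
  then obtain l where "poly p l = 0" using fundamental_theorem_of_algebra by blast
  then obtain q where q: "p = [:- l, 1:] * q"
    by (metis dvdE poly_eq_0_iff_dvd)
  have "q \<noteq> 0" using Suc.prems(1) q by auto
  have "degree p = degree [:- l, 1:] + degree q"
    unfolding q by (rule degree_mult_eq) (use \<open>q \<noteq> 0\<close> in auto)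
  then have "d = degree q" using Suc(2) by simp
  have "cmod l < 1" using Suc.prems(2) \<open>poly p l = 0\<close> by blast
  have "poly_shift q w (Suc k) = l * poly_shift q w k + poly_shift p w k" for k
    unfolding q poly_shift_linear_factor by simp
  then have "(\<lambda>k. poly_shift q w k) \<longlonglongrightarrow> L / (1 - l)"
    using \<open>cmod l < 1\<close> Suc.prems(3) by (rule first_order_recurrence_tendsto)
  moreover have "poly q s = 0 \<Longrightarrow> cmod s < 1" for s
    using Suc.prems(2)[of s] by (simp add: q)
  ultimately have "w \<longlonglongrightarrow> L / (1 - l) / poly q 1"
    using Suc(1)[OF \<open>d = degree q\<close> \<open>q \<noteq> 0\<close>] by blast
  moreover have "poly p 1 = (1 - l) * poly q 1"
    by (simp add: q algebra_simps)
  ultimately show ?case by (simp add: divide_divide_eq_left)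
qed

lemma pow_mat_smult:
  fixes A :: "'a::comm_ring_1 mat"
  assumes A: "A \<in> carrier_mat n n"
  shows "(c \<cdot>\<^sub>m A) ^\<^sub>m k = c ^ k \<cdot>\<^sub>m (A ^\<^sub>m k)"
proof (induction k)
  case 0
  then show ?case using A by (auto intro!: eq_matI)
next
  case (Suc k)
  have Ak: "A ^\<^sub>m k \<in> carrier_mat n n" using A by simp
  have "(c \<cdot>\<^sub>m A) ^\<^sub>m Suc k = (c ^ k \<cdot>\<^sub>m (A ^\<^sub>m k)) * (c \<cdot>\<^sub>m A)" using Suc by simp
  also have "\<dots> = c ^ k \<cdot>\<^sub>m ((A ^\<^sub>m k) * (c \<cdot>\<^sub>m A))" by (rule mult_smult_assoc_mat) (use Ak A in auto)
  also have "(A ^\<^sub>m k) * (c \<cdot>\<^sub>m A) = c \<cdot>\<^sub>m ((A ^\<^sub>m k) * A)" by (rule mult_smult_distrib) (use Ak A in auto)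
  finally show ?case by (auto intro!: eq_matI simp: mult.commute)
qed

text \<open>Scaling \<open>F\<close> by \<open>1 / \<rho>\<close>, with \<open>\<rho>\<close> strictly between the spectral radius and \<open>1\<close>, gives a matrix
  of spectral radius below \<open>1\<close>, whose powers are bounded.\<close>

lemma schur_stable_pow_decay:
  fixes F :: "real mat"
  assumes F: "F \<in> carrier_mat n n" and n: "0 < n"
    and stable: "\<And>e. eigenvalue (map_mat complex_of_real F) e \<Longrightarrow> cmod e < 1"
  obtains \<rho> c where "0 < \<rho>" "\<rho> < 1" "\<And>k i j. i < n \<Longrightarrow> j < n \<Longrightarrow> \<bar>(F ^\<^sub>m k) $$ (i, j)\<bar> \<le> c * \<rho> ^ k"
proof -
  define Fc where "Fc = map_mat complex_of_real F"
  have Fc: "Fc \<in> carrier_mat n n" using F by (simp add: Fc_def)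
  obtain e0 where e0: "eigenvalue Fc e0" "spectral_radius Fc = cmod e0"
    using spectral_radius_mem_max(1)[OF Fc n] by (auto simp: spectrum_def)
  define \<rho> where "\<rho> = (spectral_radius Fc + 1) / 2"
  have "0 \<le> spectral_radius Fc" "spectral_radius Fc < 1"
    using stable[of e0] e0 by (simp_all add: Fc_def)
  then have \<rho>: "0 < \<rho>" "\<rho> < 1" "spectral_radius Fc < \<rho>"
    by (simp_all add: \<rho>_def field_simps)
  define G where "G = complex_of_real (1 / \<rho>) \<cdot>\<^sub>m Fc"
  have G: "G \<in> carrier_mat n n" using Fc by (simp add: G_def)
  have FG: "Fc = complex_of_real \<rho> \<cdot>\<^sub>m G"
    using Fc \<rho> by (auto simp: G_def intro!: eq_matI)
  have "cmod e < 1" if "eigenvalue G e" for e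
  proof -
    from that obtain v where v: "v \<in> carrier_vec n" "v \<noteq> 0\<^sub>v n" "G *\<^sub>v v = e \<cdot>\<^sub>v v"
      using G by (auto simp: eigenvalue_def eigenvector_def)
    have "Fc *\<^sub>v v = complex_of_real \<rho> \<cdot>\<^sub>v (G *\<^sub>v v)"
      unfolding FG using G v(1) by (intro eq_vecI) (auto simp: scalar_prod_smult_left)
    also have "\<dots> = (complex_of_real \<rho> * e) \<cdot>\<^sub>v v"
      unfolding v(3) by (auto intro!: eq_vecI)
    finally have "Fc *\<^sub>v v = (complex_of_real \<rho> * e) \<cdot>\<^sub>v v" .
    then have "eigenvalue Fc (complex_of_real \<rho> * e)"
      using v Fc by (auto simp: eigenvalue_def eigenvector_def)
    then have "\<rho> * cmod e \<le> spectral_radius Fc"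
      using spectral_radius_mem_max(2)[OF Fc n] \<rho> by (force simp: spectrum_def norm_mult)
    then have "\<rho> * cmod e < \<rho> * 1" using \<rho> by linarith
    then show ?thesis using \<rho>(1) by (simp only: mult_less_cancel_left_pos)
  qed
  then have "spectral_radius G < 1"
    using spectral_radius_mem_max(1)[OF G n] by (auto simp: spectrum_def)
  then obtain c where c: "\<And>k. norm_bound (G ^\<^sub>m k) c"
    using spectral_radius_jnf_norm_bound_less_1_upper_triangular[OF G] by blast
  have "\<bar>(F ^\<^sub>m k) $$ (i, j)\<bar> \<le> c * \<rho> ^ k" if ij: "i < n" "j < n" for k i j
  proof -
    have "map_mat complex_of_real (F ^\<^sub>m k) = Fc ^\<^sub>m k"
      unfolding Fc_def by (rule of_real_hom.mat_hom_pow[OF F])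
    then have "complex_of_real ((F ^\<^sub>m k) $$ (i, j)) = (Fc ^\<^sub>m k) $$ (i, j)"
      using ij F by (metis index_map_mat(1) pow_mat_dim_square)
    also have "Fc ^\<^sub>m k = complex_of_real \<rho> ^ k \<cdot>\<^sub>m (G ^\<^sub>m k)"
      unfolding FG by (rule pow_mat_smult[OF G])
    finally have "\<bar>(F ^\<^sub>m k) $$ (i, j)\<bar> = cmod (complex_of_real \<rho> ^ k * (G ^\<^sub>m k) $$ (i, j))"
      using ij G by (metis index_smult_mat(1) pow_mat_dim_square norm_of_real carrier_matD)
    also have "\<dots> = \<rho> ^ k * cmod ((G ^\<^sub>m k) $$ (i, j))"
      using \<rho> by (simp add: norm_mult norm_power)
    also have "\<dots> \<le> \<rho> ^ k * c"
      using c[of k] ij G \<rho> by (intro mult_left_mono) (auto simp: norm_bound_def)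
    finally show ?thesis by (simp add: mult.commute)
  qed
  with \<rho> that show ?thesis by blast
qed

lemma linear_recurrence_decay:
  fixes F :: "real mat"
  assumes F: "F \<in> carrier_mat n n"
    and pow_bound: "\<And>k i j. i < n \<Longrightarrow> j < n \<Longrightarrow> \<bar>(F ^\<^sub>m k) $$ (i, j)\<bar> \<le> c * \<rho> ^ k"
    and e: "e 0 \<in> carrier_vec n" "\<And>k. e (Suc k) = F *\<^sub>v e k" and l: "l < n"
  shows "\<bar>e k $ l\<bar> \<le> c * \<rho> ^ k * (\<Sum>j<n. \<bar>e 0 $ j\<bar>)"
proof -
  have "e (j + k) = (F ^\<^sub>m k) *\<^sub>v e j" if "e j \<in> carrier_vec n" for j
    using that
  proof (induction k arbitrary: j)
    case (Suc k)
    have "e (j + Suc k) = (F ^\<^sub>m k) *\<^sub>v (F *\<^sub>v e j)"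
      using Suc.IH[of "Suc j"] Suc.prems F by (simp add: e(2))
    also have "\<dots> = (F ^\<^sub>m k * F) *\<^sub>v e j"
      using F Suc.prems by (simp add: assoc_mult_mat_vec[of _ n n _ n])
    also have "\<dots> = (F ^\<^sub>m Suc k) *\<^sub>v e j"
      by simp
    finally show ?case .
  qed (use F in simp)
  from this[of 0] e(1) have "e k $ l = (\<Sum>j<n. (F ^\<^sub>m k) $$ (l, j) * e 0 $ j)"
    using F l by (simp add: scalar_prod_def lessThan_atLeast0 row_def)
  then have "\<bar>e k $ l\<bar> \<le> (\<Sum>j<n. \<bar>(F ^\<^sub>m k) $$ (l, j)\<bar> * \<bar>e 0 $ j\<bar>)"
    by (simp add: sum_abs abs_mult order_trans[OF sum_abs])
  also have "\<dots> \<le> (\<Sum>j<n. c * \<rho> ^ k * \<bar>e 0 $ j\<bar>)"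
    using pow_bound l by (intro sum_mono mult_right_mono) auto
  finally show ?thesis by (simp add: sum_distrib_left)
qed

lemma schur_trajectories_summable_bound:
  fixes F :: "real mat" and e :: "nat \<Rightarrow> nat \<Rightarrow> real vec"
  assumes F: "F \<in> carrier_mat n n" "0 < n"
    and stable: "\<And>ev. eigenvalue (map_mat complex_of_real F) ev \<Longrightarrow> cmod ev < 1"
    and e: "\<And>i. i < N \<Longrightarrow> e i 0 \<in> carrier_vec n" "\<And>i k. i < N \<Longrightarrow> e i (Suc k) = F *\<^sub>v e i k"
  obtains g where "summable g" "\<And>k. 0 \<le> g k" "\<And>i k l. i < N \<Longrightarrow> l < n \<Longrightarrow> \<bar>e i k $ l\<bar> \<le> g k"
proof -
  obtain \<rho> c where \<rho>: "0 < \<rho>" "\<rho> < 1"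
    and pow: "\<And>k i j. i < n \<Longrightarrow> j < n \<Longrightarrow> \<bar>(F ^\<^sub>m k) $$ (i, j)\<bar> \<le> c * \<rho> ^ k"
    using schur_stable_pow_decay[OF F stable] by blast
  define E0 where "E0 = (\<Sum>i<N. \<Sum>j<n. \<bar>e i 0 $ j\<bar>)"
  have c: "0 \<le> c * \<rho> ^ k" for k
    using order_trans[OF abs_ge_zero pow[of 0 0 k]] F(2) by simp
  show ?thesis
  proof (rule that[of "\<lambda>k. c * E0 * \<rho> ^ k"])
    show "summable (\<lambda>k. c * E0 * \<rho> ^ k)"
      using \<rho> by (intro summable_mult summable_geometric) simp
    have "0 \<le> c * \<rho> ^ k * E0" for k
      by (rule mult_nonneg_nonneg[OF c]) (simp add: E0_def sum_nonneg)
    then show "0 \<le> c * E0 * \<rho> ^ k" for k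
      by (simp add: mult_ac)
    show "\<bar>e i k $ l\<bar> \<le> c * E0 * \<rho> ^ k" if "i < N" "l < n" for i k l
    proof -
      have "\<bar>e i k $ l\<bar> \<le> c * \<rho> ^ k * (\<Sum>j<n. \<bar>e i 0 $ j\<bar>)"
        by (rule linear_recurrence_decay[OF F(1) pow, where e = "e i"]) (use e that in auto)
      also have "\<dots> \<le> c * \<rho> ^ k * E0"
        unfolding E0_def using c[of k] that
        by (intro mult_left_mono member_le_sum[of i]) (auto intro: sum_nonneg)
      finally show ?thesis by (simp add: mult_ac)
    qed
  qed
qed

section \<open>Integrator chains with observers\<close>

lemma int_A_mult_vec_nth:
  assumes "x \<in> carrier_vec m" "l < m"
  shows "(int_A m *\<^sub>v x) $ l = (if Suc l < m then x $ Suc l else 0)"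
proof -
  have "(int_A m *\<^sub>v x) $ l = (\<Sum>j<m. (if j = Suc l then 1 else 0) * x $ j)"
    using assms by (simp add: int_A_def mult_mat_vec_def scalar_prod_def lessThan_atLeast0)
  also have "\<dots> = (\<Sum>j<m. if j = Suc l then x $ j else 0)"
    by (rule sum.cong) auto
  finally show ?thesis by (simp add: sum.delta')
qed

lemma int_A_carrier [simp]: "int_A m \<in> carrier_mat m m"
  by (simp add: int_A_def)

lemma int_B_carrier [simp]: "int_B m \<in> carrier_vec m"
  by (simp add: int_B_def)

lemma integrator_step_nth:
  assumes "x \<in> carrier_vec m" "l < m"
  shows "(int_A m *\<^sub>v x + u \<cdot>\<^sub>v int_B m) $ l = (if l = m - 1 then u else x $ Suc l)"
  using assms int_A_mult_vec_nth[OF assms] by (auto simp: int_A_def int_B_def)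

lemma integrator_step_carrier:
  "x \<in> carrier_vec m \<Longrightarrow> int_A m *\<^sub>v x + u \<cdot>\<^sub>v int_B m \<in> carrier_vec m"
  using mult_mat_vec_carrier[OF int_A_carrier] by simp

lemma integrator_carrier:
  assumes "x 0 \<in> carrier_vec m" "\<And>k. x (Suc k) = int_A m *\<^sub>v x k + u k \<cdot>\<^sub>v int_B m"
  shows "x k \<in> carrier_vec m"
  by (induction k) (simp_all add: assms integrator_step_carrier)

lemma integrator_state_shift:
  assumes "x 0 \<in> carrier_vec m" "\<And>k. x (Suc k) = int_A m *\<^sub>v x k + u k \<cdot>\<^sub>v int_B m" and "l < m"
  shows "x k $ l = x (k + l) $ 0"
  using \<open>l < m\<close>
proof (induction l arbitrary: k)
  case (Suc l)
  have "l \<noteq> m - 1" "l < m" using Suc.prems by simp_all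
  then have "x (Suc k) $ l = x k $ Suc l"
    using integrator_step_nth[OF integrator_carrier[OF assms(1,2)], of l k "u k"] assms(2)
    by simp
  then show ?case using Suc.IH[of "Suc k"] Suc.prems by simp
qed simp

lemma gainK5_inner:
  assumes "x \<in> carrier_vec (Suc n)"
  shows "gainK5 (Suc n) b \<bullet> x = (\<Sum>l<n. b (l + 1) * x $ l) + x $ n"
  using assms by (simp add: gainK5_def scalar_prod_def lessThan_atLeast0[symmetric] sum.lessThan_Suc)

text \<open>This is where the shape of \<open>K\<^sub>4\<close> comes from: \<open>K\<^sub>4\<close> is \<open>K\<^sub>5\<close> minus \<open>K\<^sub>5\<close> shifted by one
  position, so that \<open>K\<^sub>5\<close> applied to the next integrator state reproduces \<open>K\<^sub>5 x\<close>.\<close>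

lemma gainK4_inner_add_shift:
  assumes x: "x \<in> carrier_vec (Suc n)" and n: "1 \<le> n"
  shows "gainK4 (Suc n) b \<bullet> x + (\<Sum>l<n. b (l + 1) * x $ Suc l) = gainK5 (Suc n) b \<bullet> x"
proof -
  define f where "f l = (if l = 0 then 0 else b l * x $ l)" for l
  have shifted: "(\<Sum>l<n. b (l + 1) * x $ Suc l) = (\<Sum>l<n. f l) + f n"
    using sum.lessThan_Suc_shift[of f n] by (simp add: f_def)
  have "gainK4 (Suc n) b \<bullet> x
      = (\<Sum>l<n. (b (l + 1) - (if l = 0 then 0 else b l)) * x $ l) + (1 - b n) * x $ n"
    using x n by (auto simp: gainK4_def scalar_prod_def lessThan_atLeast0[symmetric] sum.lessThan_Suc
        intro!: sum.cong)
  also have "(\<Sum>l<n. (b (l + 1) - (if l = 0 then 0 else b l)) * x $ l)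
      = (\<Sum>l<n. b (l + 1) * x $ l) - (\<Sum>l<n. f l)"
    by (simp add: f_def sum_subtractf[symmetric] algebra_simps) (rule sum.cong, auto)
  finally show ?thesis
    using shifted gainK5_inner[OF x] n by (simp add: f_def algebra_simps)
qed

lemma gainK5_integrator_step:
  assumes x: "x \<in> carrier_vec m" and m: "2 \<le> m"
  shows "gainK5 m b \<bullet> (int_A m *\<^sub>v x + u \<cdot>\<^sub>v int_B m) = gainK5 m b \<bullet> x - gainK4 m b \<bullet> x + u"
proof -
  obtain n where n: "m = Suc n" "1 \<le> n" using m by (cases m) auto
  let ?x' = "int_A m *\<^sub>v x + u \<cdot>\<^sub>v int_B m"
  have "?x' \<in> carrier_vec (Suc n)" using integrator_step_carrier[OF x] n by simp
  then have "gainK5 m b \<bullet> ?x' = (\<Sum>l<n. b (l + 1) * ?x' $ l) + ?x' $ n"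
    unfolding n(1) by (rule gainK5_inner)
  also have "\<dots> = (\<Sum>l<n. b (l + 1) * x $ Suc l) + u"
    using integrator_step_nth[OF x, of _ u] n by simp
  also have "\<dots> = gainK5 m b \<bullet> x - gainK4 m b \<bullet> x + u"
    using gainK4_inner_add_shift[of x n b] x n by simp
  finally show ?thesis .
qed

lemma coeff_char_b:
  "coeff (char_b (Suc n) b) j = (if j = n then 1 else if j < n then complex_of_real (b (j + 1)) else 0)"
  by (auto simp: char_b_def coeff_sum coeff_monom)

lemma poly_char_b_one: "poly (char_b m b) 1 = complex_of_real (1 + (\<Sum>l<m - 1. b (l + 1)))"
  unfolding char_b_def poly_add poly_sum poly_monom by simp

lemma poly_shift_char_b:
  assumes "0 < m" "x \<in> carrier_vec m" "\<And>l. l < m \<Longrightarrow> x $ l = w (k + l)"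
  shows "poly_shift (char_b m b) (\<lambda>k. complex_of_real (w k)) k = complex_of_real (gainK5 m b \<bullet> x)"
proof -
  obtain n where n: "m = Suc n" using assms(1) by (cases m) auto
  have "degree (char_b m b) < Suc n"
    using degree_le[of n "char_b m b"] by (simp add: n coeff_char_b)
  then have "poly_shift (char_b m b) (\<lambda>k. complex_of_real (w k)) k
      = (\<Sum>j<Suc n. coeff (char_b m b) j * complex_of_real (w (k + j)))"
    by (rule poly_shift_eq_sum)
  also have "\<dots> = complex_of_real ((\<Sum>j<n. b (j + 1) * w (k + j)) + w (k + n))"
    by (simp add: n coeff_char_b)
  also have "(\<Sum>j<n. b (j + 1) * w (k + j)) + w (k + n) = gainK5 m b \<bullet> x"
    using gainK5_inner[of x n b] assms(2,3) n by simp
  finally show ?thesis .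
qed

text \<open>The output of a gain-\<open>K\<^sub>5\<close> measurement of an integrator chain is the characteristic
  polynomial in the shift operator applied to the first state, so its convergence propagates
  to every state through the stable recurrence.\<close>

lemma integrator_chain_tendsto:
  assumes m: "0 < m" and x: "x 0 \<in> carrier_vec m" "\<And>k. x (Suc k) = int_A m *\<^sub>v x k + u k \<cdot>\<^sub>v int_B m"
    and stable: "\<And>s. poly (char_b m b) s = 0 \<Longrightarrow> cmod s < 1"
    and U: "(\<lambda>k. gainK5 m b \<bullet> x k) \<longlonglongrightarrow> U" and "l < m"
  shows "(\<lambda>k. x k $ l) \<longlonglongrightarrow> U / (1 + (\<Sum>l<m - 1. b (l + 1)))"
proof -
  define w where "w k = x k $ 0" for k
  have shift: "x k $ l = w (k + l)" if "l < m" for k l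
    using integrator_state_shift[OF x that] by (simp add: w_def)
  have "coeff (char_b m b) (m - 1) = 1"
    using m coeff_char_b[of "m - 1" b "m - 1"] by simp
  then have "char_b m b \<noteq> 0" by auto
  moreover have "(\<lambda>k. poly_shift (char_b m b) (\<lambda>k. complex_of_real (w k)) k) \<longlonglongrightarrow> complex_of_real U"
    using poly_shift_char_b[OF m integrator_carrier[OF x] shift] tendsto_of_real[OF U] by simp
  ultimately have "(\<lambda>k. complex_of_real (w k)) \<longlonglongrightarrow> complex_of_real U / poly (char_b m b) 1"
    using tendsto_if_poly_shift_tendsto stable by blast
  then have "w \<longlonglongrightarrow> U / (1 + (\<Sum>l<m - 1. b (l + 1)))"
    using tendsto_Re by (fastforce simp: poly_char_b_one)
  then show ?thesis
    using LIMSEQ_ignore_initial_segment shift \<open>l < m\<close> by simp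
qed

lemma observer_error_trajectory:
  fixes A K C :: "real mat"
  assumes A: "A \<in> carrier_mat m m" and K: "K \<in> carrier_mat m 1" and C: "C \<in> carrier_mat 1 m"
    and B: "B \<in> carrier_vec m"
    and x: "\<And>k. x k \<in> carrier_vec m" "\<And>k. x (Suc k) = A *\<^sub>v x k + u k \<cdot>\<^sub>v B"
    and z: "z 0 \<in> carrier_vec m" "\<And>k. z (Suc k) = (A + K * C) *\<^sub>v z k + u k \<cdot>\<^sub>v B - K *\<^sub>v (C *\<^sub>v x k)"
  shows "z k \<in> carrier_vec m" and "z (Suc k) - x (Suc k) = (A + K * C) *\<^sub>v (z k - x k)"
proof -
  have F: "A + K * C \<in> carrier_mat m m" and Cx: "C *\<^sub>v x k \<in> carrier_vec 1" for k
    using A K C x(1) by auto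
  show zk: "z k \<in> carrier_vec m"
    by (induction k) (use z F Cx K B in auto)
  have "(A + K * C) *\<^sub>v x k = A *\<^sub>v x k + K *\<^sub>v (C *\<^sub>v x k)"
    using A K C x(1) by (simp add: add_mult_distrib_mat_vec)
  moreover have "(A + K * C) *\<^sub>v (z k - x k) = (A + K * C) *\<^sub>v z k - (A + K * C) *\<^sub>v x k"
    using F x(1) zk by (simp add: mult_minus_distrib_mat_vec)
  ultimately show "z (Suc k) - x (Suc k) = (A + K * C) *\<^sub>v (z k - x k)"
    unfolding x(2) z(2) using A K C B x(1) zk by (intro eq_vecI) auto
qed

lemma abs_scalar_prod_le:
  fixes K v :: "real vec"
  assumes "K \<in> carrier_vec m" "v \<in> carrier_vec m" "\<And>l. l < m \<Longrightarrow> \<bar>v $ l\<bar> \<le> g"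
  shows "\<bar>K \<bullet> v\<bar> \<le> (\<Sum>l<m. \<bar>K $ l\<bar>) * g"
proof -
  have "\<bar>K \<bullet> v\<bar> \<le> (\<Sum>l<m. \<bar>K $ l\<bar> * \<bar>v $ l\<bar>)"
    using assms(1,2) by (simp add: scalar_prod_def lessThan_atLeast0 order_trans[OF sum_abs] abs_mult)
  also have "\<dots> \<le> (\<Sum>l<m. \<bar>K $ l\<bar> * g)"
    using assms(3) by (intro sum_mono mult_left_mono) auto
  finally show ?thesis by (simp add: sum_distrib_right)
qed

lemma gainK5_closed_loop:
  assumes "2 \<le> m" "x \<in> carrier_vec m" "z \<in> carrier_vec m"
    and nbrs: "\<And>j. j \<in> J \<Longrightarrow> xs j \<in> carrier_vec m \<and> zs j \<in> carrier_vec m"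
    and u: "u = gainK4 m b \<bullet> z - c * (\<Sum>j\<in>J. a j * (gainK5 m b \<bullet> (z - zs j)))"
  shows "gainK5 m b \<bullet> (int_A m *\<^sub>v x + u \<cdot>\<^sub>v int_B m)
    = gainK5 m b \<bullet> x - c * (\<Sum>j\<in>J. a j * (gainK5 m b \<bullet> x - gainK5 m b \<bullet> xs j))
      + (gainK4 m b \<bullet> (z - x) - c * (\<Sum>j\<in>J. a j * (gainK5 m b \<bullet> (z - x) - gainK5 m b \<bullet> (zs j - xs j))))"
    (is "_ = _ - c * ?consensus + (_ - c * ?error)")
proof -
  have K4: "gainK4 m b \<in> carrier_vec m" and K5: "gainK5 m b \<in> carrier_vec m"
    by (simp_all add: gainK4_def gainK5_def)
  have split: "gainK5 m b \<bullet> (z - zs j) = (gainK5 m b \<bullet> x - gainK5 m b \<bullet> xs j)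
      + (gainK5 m b \<bullet> (z - x) - gainK5 m b \<bullet> (zs j - xs j))" if "j \<in> J" for j
  proof -
    have xs: "xs j \<in> carrier_vec m" and zs: "zs j \<in> carrier_vec m" using nbrs[OF that] by auto
    show ?thesis
      using scalar_prod_minus_distrib[OF K5 assms(3) zs] scalar_prod_minus_distrib[OF K5 assms(3,2)]
        scalar_prod_minus_distrib[OF K5 zs xs] by linarith
  qed
  have "(\<Sum>j\<in>J. a j * (gainK5 m b \<bullet> (z - zs j))) = ?consensus + ?error"
    unfolding sum.distrib[symmetric] distrib_left[symmetric]
  proof (rule sum.cong[OF refl])
    fix j assume "j \<in> J"
    show "a j * (gainK5 m b \<bullet> (z - zs j)) = a j * (gainK5 m b \<bullet> x - gainK5 m b \<bullet> xs j
        + (gainK5 m b \<bullet> (z - x) - gainK5 m b \<bullet> (zs j - xs j)))"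
      by (subst split[OF \<open>j \<in> J\<close>]) (rule refl)
  qed
  then have "c * (\<Sum>j\<in>J. a j * (gainK5 m b \<bullet> (z - zs j))) = c * ?consensus + c * ?error"
    by (simp only: distrib_left)
  moreover have "gainK4 m b \<bullet> (z - x) = gainK4 m b \<bullet> z - gainK4 m b \<bullet> x"
    by (rule scalar_prod_minus_distrib[OF K4 assms(3,2)])
  ultimately show ?thesis
    using gainK5_integrator_step[OF assms(2,1), of b u] u by linarith
qed

lemma closed_loop_disturbance_le:
  fixes K L :: "real vec" and a :: "nat \<Rightarrow> real"
  assumes "finite J" "\<forall>j\<in>J. 0 \<le> a j" "K \<in> carrier_vec m" "L \<in> carrier_vec m" "0 \<le> g"
    and e: "e \<in> carrier_vec m" "\<And>l. l < m \<Longrightarrow> \<bar>e $ l\<bar> \<le> g"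
    and es: "\<And>j. j \<in> J \<Longrightarrow> es j \<in> carrier_vec m" "\<And>j l. j \<in> J \<Longrightarrow> l < m \<Longrightarrow> \<bar>es j $ l\<bar> \<le> g"
  shows "\<bar>K \<bullet> e - 1 / (1 + sum a J) * (\<Sum>j\<in>J. a j * (L \<bullet> e - L \<bullet> es j))\<bar>
    \<le> ((\<Sum>l<m. \<bar>K $ l\<bar>) + 2 * (\<Sum>l<m. \<bar>L $ l\<bar>)) * g"
proof -
  have L_e: "\<bar>L \<bullet> e\<bar> \<le> (\<Sum>l<m. \<bar>L $ l\<bar>) * g"
    using abs_scalar_prod_le[OF assms(4) e] .
  have "\<bar>L \<bullet> e - L \<bullet> es j\<bar> \<le> 2 * ((\<Sum>l<m. \<bar>L $ l\<bar>) * g)" if "j \<in> J" for j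
    using L_e abs_scalar_prod_le[OF assms(4) es[OF that]] by linarith
  then have "\<bar>1 / (1 + sum a J) * (\<Sum>j\<in>J. a j * (L \<bullet> e - L \<bullet> es j))\<bar> \<le> 2 * ((\<Sum>l<m. \<bar>L $ l\<bar>) * g)"
    using assms(1,2,5) by (intro abs_normalized_weighted_sum_le) (auto intro: sum_nonneg)
  moreover have "\<bar>K \<bullet> e\<bar> \<le> (\<Sum>l<m. \<bar>K $ l\<bar>) * g"
    using abs_scalar_prod_le[OF assms(3) e] .
  moreover have "((\<Sum>l<m. \<bar>K $ l\<bar>) + 2 * (\<Sum>l<m. \<bar>L $ l\<bar>)) * g
      = (\<Sum>l<m. \<bar>K $ l\<bar>) * g + 2 * ((\<Sum>l<m. \<bar>L $ l\<bar>) * g)"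
    by (simp add: algebra_simps)
  ultimately show ?thesis
    using abs_triangle_ineq4[of "K \<bullet> e"] by linarith
qed

theorem closed_loop_consensus:
  fixes \<alpha> :: "'q \<Rightarrow> nat \<Rightarrow> nat \<Rightarrow> real" and \<sigma> :: "nat \<Rightarrow> 'q"
    and x z :: "nat \<Rightarrow> nat \<Rightarrow> real vec" and u :: "nat \<Rightarrow> nat \<Rightarrow> real" and g :: "nat \<Rightarrow> real"
  assumes "1 \<le> N" "2 \<le> m" "finite S" "\<And>k. \<sigma> k \<in> S" and nonneg: "\<And>q i j. q \<in> S \<Longrightarrow> 0 \<le> \<alpha> q i j"
    and "\<And>q i. q \<in> S \<Longrightarrow> \<alpha> q i i = 0" "UJQSC N \<alpha> \<sigma>"
    and x: "\<And>i k. i < N \<Longrightarrow> x i k \<in> carrier_vec m"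
      "\<And>i k. i < N \<Longrightarrow> x i (Suc k) = int_A m *\<^sub>v x i k + u i k \<cdot>\<^sub>v int_B m"
    and z: "\<And>i k. i < N \<Longrightarrow> z i k \<in> carrier_vec m"
    and u: "\<And>i k. i < N \<Longrightarrow> u i k = gainK4 m b \<bullet> z i k
      - (1 / (1 + (\<Sum>j\<in>nbrs N \<alpha> (\<sigma> k) i. \<alpha> (\<sigma> k) i j)))
        * (\<Sum>j\<in>nbrs N \<alpha> (\<sigma> k) i. \<alpha> (\<sigma> k) i j * (gainK5 m b \<bullet> (z i k - z j k)))"
    and g: "summable g" "\<And>k. 0 \<le> g k" "\<And>i k l. i < N \<Longrightarrow> l < m \<Longrightarrow> \<bar>(z i k - x i k) $ l\<bar> \<le> g k"
  shows "\<exists>U. \<forall>i<N. (\<lambda>k. gainK5 m b \<bullet> x i k) \<longlonglongrightarrow> U"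
proof (rule switching_consensus_summable_disturbance[OF assms(1,3,4,5,6,7),
      where D = "\<lambda>k. ((\<Sum>l<m. \<bar>gainK4 m b $ l\<bar>) + 2 * (\<Sum>l<m. \<bar>gainK5 m b $ l\<bar>)) * g k"])
  fix i k assume i: "i < N"
  have nbrs: "x j k \<in> carrier_vec m \<and> z j k \<in> carrier_vec m" if "j \<in> nbrs N \<alpha> (\<sigma> k) i" for j
    using that x z by (simp add: nbrs_def)
  show "gainK5 m b \<bullet> x i (Suc k) = gainK5 m b \<bullet> x i k
    - 1 / (1 + (\<Sum>j\<in>nbrs N \<alpha> (\<sigma> k) i. \<alpha> (\<sigma> k) i j))
      * (\<Sum>j\<in>nbrs N \<alpha> (\<sigma> k) i. \<alpha> (\<sigma> k) i j * (gainK5 m b \<bullet> x i k - gainK5 m b \<bullet> x j k))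
    + (gainK4 m b \<bullet> (z i k - x i k) - 1 / (1 + (\<Sum>j\<in>nbrs N \<alpha> (\<sigma> k) i. \<alpha> (\<sigma> k) i j))
      * (\<Sum>j\<in>nbrs N \<alpha> (\<sigma> k) i. \<alpha> (\<sigma> k) i j
          * (gainK5 m b \<bullet> (z i k - x i k) - gainK5 m b \<bullet> (z j k - x j k))))"
    unfolding x(2)[OF i] by (rule gainK5_closed_loop[OF assms(2) x(1)[OF i] z[OF i] nbrs u[OF i]])
  show "\<bar>gainK4 m b \<bullet> (z i k - x i k) - 1 / (1 + (\<Sum>j\<in>nbrs N \<alpha> (\<sigma> k) i. \<alpha> (\<sigma> k) i j))
      * (\<Sum>j\<in>nbrs N \<alpha> (\<sigma> k) i. \<alpha> (\<sigma> k) i j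
          * (gainK5 m b \<bullet> (z i k - x i k) - gainK5 m b \<bullet> (z j k - x j k)))\<bar>
    \<le> ((\<Sum>l<m. \<bar>gainK4 m b $ l\<bar>) + 2 * (\<Sum>l<m. \<bar>gainK5 m b $ l\<bar>)) * g k"
    using i x z g nonneg[OF assms(4)]
    by (intro closed_loop_disturbance_le) (auto simp: nbrs_def gainK4_def gainK5_def)
next
  show "summable (\<lambda>k. ((\<Sum>l<m. \<bar>gainK4 m b $ l\<bar>) + 2 * (\<Sum>l<m. \<bar>gainK5 m b $ l\<bar>)) * g k)"
    using g(1) by (rule summable_mult)
qed

theorem theorem3:
  fixes N m :: nat
    and S :: "'q set" and \<alpha> :: "'q \<Rightarrow> nat \<Rightarrow> nat \<Rightarrow> real" and \<sigma> :: "nat \<Rightarrow> 'q"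
    and b :: "nat \<Rightarrow> real" and C K6 :: "real mat"
    and x z :: "nat \<Rightarrow> nat \<Rightarrow> real vec" and u :: "nat \<Rightarrow> nat \<Rightarrow> real"
  assumes "N \<ge> 1" and "m \<ge> 2"
    and "finite S" and "\<And>k. \<sigma> k \<in> S"
    and "\<And>q i j. q \<in> S \<Longrightarrow> \<alpha> q i j \<ge> 0"
    and "\<And>q i. q \<in> S \<Longrightarrow> \<alpha> q i i = 0"
    and "\<And>q i j. q \<in> S \<Longrightarrow> (i \<ge> N \<or> j \<ge> N) \<Longrightarrow> \<alpha> q i j = 0"
    and "C \<in> carrier_mat 1 m" and "K6 \<in> carrier_mat m 1"
    and "UJQSC N \<alpha> \<sigma>"
    and "\<And>ev. eigenvalue (map_mat complex_of_real (int_A m + K6 * C)) ev \<Longrightarrow> cmod ev < 1"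
    and "\<And>s. poly (char_b m b) s = 0 \<Longrightarrow> cmod s < 1"
    and "\<And>i. i < N \<Longrightarrow> x i 0 \<in> carrier_vec m"
    and "\<And>i. i < N \<Longrightarrow> z i 0 \<in> carrier_vec m"
    and "\<And>i k. i < N \<Longrightarrow> x i (Suc k) = int_A m *\<^sub>v x i k + u i k \<cdot>\<^sub>v int_B m"
    and "\<And>i k. i < N \<Longrightarrow> u i k =
          gainK4 m b \<bullet> z i k
          - (1 / (1 + (\<Sum>j\<in>nbrs N \<alpha> (\<sigma> k) i. \<alpha> (\<sigma> k) i j)))
            * (\<Sum>j\<in>nbrs N \<alpha> (\<sigma> k) i. \<alpha> (\<sigma> k) i j * (gainK5 m b \<bullet> (z i k - z j k)))"
    and "\<And>i k. i < N \<Longrightarrow> z i (Suc k) =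
          (int_A m + K6 * C) *\<^sub>v z i k + u i k \<cdot>\<^sub>v int_B m - K6 *\<^sub>v (C *\<^sub>v x i k)"
  shows "\<exists>xs :: real vec. xs \<in> carrier_vec m \<and>
           (\<forall>i<N. \<forall>l<m. (\<lambda>k. x i k $ l) \<longlonglongrightarrow> xs $ l)"
proof -
  define F where "F = int_A m + K6 * C"
  have x: "x i k \<in> carrier_vec m" if "i < N" for i k
    using integrator_carrier[of "x i"] assms(13,15) that by blast
  note observer = observer_error_trajectory[OF int_A_carrier assms(9,8) int_B_carrier x assms(15)
      assms(14) assms(17), folded F_def]
  have z: "z i k \<in> carrier_vec m" if "i < N" for i k
    by (rule observer(1)) (use that in simp_all)
  have error_step: "z i (Suc k) - x i (Suc k) = F *\<^sub>v (z i k - x i k)" if "i < N" for i k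
    by (rule observer(2)) (use that in simp_all)
  have F: "F \<in> carrier_mat m m" "0 < m"
    using assms(2,8,9) by (simp_all add: F_def)
  have stable: "\<And>ev. eigenvalue (map_mat complex_of_real F) ev \<Longrightarrow> cmod ev < 1"
    using assms(11) by (simp add: F_def)
  have "z i 0 - x i 0 \<in> carrier_vec m" if "i < N" for i
    using x z that by simp
  from schur_trajectories_summable_bound[of F m N "\<lambda>i k. z i k - x i k", OF F stable this error_step]
  obtain g where g: "summable g" "\<And>k. 0 \<le> g k"
    "\<And>i k l. i < N \<Longrightarrow> l < m \<Longrightarrow> \<bar>(z i k - x i k) $ l\<bar> \<le> g k"
    by blast
  obtain U where U: "\<forall>i<N. (\<lambda>k. gainK5 m b \<bullet> x i k) \<longlonglongrightarrow> U"
    using closed_loop_consensus[OF assms(1-6,10) x assms(15) z assms(16) g] by blast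
  have "(\<lambda>k. x i k $ l) \<longlonglongrightarrow> U / (1 + (\<Sum>l<m - 1. b (l + 1)))" if "i < N" "l < m" for i l
    using integrator_chain_tendsto[OF F(2) assms(13)[OF that(1)] assms(15)[OF that(1)] assms(12)]
      U that by blast
  then show ?thesis
    by (intro exI[of _ "vec m (\<lambda>_. U / (1 + (\<Sum>l<m - 1. b (l + 1))))"]) auto
qed

end
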